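(* For integers $a\ge 1$ and $n\ge 2$, the modified wheel graph $\overline{W}_n$ satisfies $$t(\overline{W}_n)=a\,W_{n-1}(a).$$ In particular, for $a=1$, $t(W_n)=L_{2n}-2$, where $L_k$ is the $k$-th Lucas number.
   Context: $t(H)$ is the number of spanning trees of $H$. The cycle graph $C_n$ ($n\ge 2$) has vertices $p_1,\dots,p_n$ and edges joining $p_i$ to $p_{i+1}$ (indices mod $n$; $C_2$ has two parallel edges). The modified wheel graph $\overline{W}_n$ is obtained from $C_n$ by adding a new vertex $p$ joined to each vertex $p_j$ by $a\ge 1$ parallel edges; for $a=1$ it is the wheel graph $W_n$. The polynomials $W_n(x)$ are defined by $W_0(x)=1$, $W_1(x)=x+4$, $W_n(x)=(x+2)W_{n-1}(x)-W_{n-2}(x)+2$ for $n\ge 2$. Lucas numbers: $L_1=1$, $L_2=3$, $L_k=L_{k-1}+L_{k-2}$. *)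

theory Defs
  imports Main
begin

text \<open>Finite multigraphs: a vertex set V, an edge set E of edge labels, and an
endpoint map ends, where ends e is the set of the (two) endpoints of edge e.
Parallel edges are distinct labels with the same endpoints.\<close>

definition adj_rel :: "('e \<Rightarrow> 'v set) \<Rightarrow> 'e set \<Rightarrow> ('v \<times> 'v) set" where
  "adj_rel ends T = {(u, v). \<exists>e\<in>T. ends e = {u, v}}"

text \<open>T is a spanning tree of (V,E,ends): T is a set of edges of the graph, the
spanning subgraph (V,T) is connected, and it is acyclic (every edge of T is a
bridge of (V,T), i.e. its endpoints are not joined by a path avoiding it).\<close>
definition spanning_tree :: "'v set \<Rightarrow> 'e set \<Rightarrow> ('e \<Rightarrow> 'v set) \<Rightarrow> 'e set \<Rightarrow> bool" where
  "spanning_tree V E ends T \<longleftrightarrow>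
     T \<subseteq> E \<and>
     (\<forall>u\<in>V. \<forall>v\<in>V. (u, v) \<in> (adj_rel ends T)\<^sup>*) \<and>
     (\<forall>e\<in>T. \<forall>u v. ends e = {u, v} \<longrightarrow> (u, v) \<notin> (adj_rel ends (T - {e}))\<^sup>*)"

definition num_spanning_trees :: "'v set \<Rightarrow> 'e set \<Rightarrow> ('e \<Rightarrow> 'v set) \<Rightarrow> nat" where
  "num_spanning_trees V E ends = card {T. spanning_tree V E ends T}"

text \<open>Modified wheel graph: hub vertex None (= p), rim vertices Some j, j < n
(Some j = p_(j+1)). Cycle edges Inl j (j < n) join Some j and Some ((j+1) mod n)
(for n = 2 these are two parallel edges); spoke edges Inr (j,k), j < n, k < a,
join None and Some j (a parallel edges per rim vertex).\<close>
definition mwheel_V :: "nat \<Rightarrow> nat option set" where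
  "mwheel_V n = insert None (Some ` {..<n})"

definition mwheel_E :: "nat \<Rightarrow> nat \<Rightarrow> (nat + nat \<times> nat) set" where
  "mwheel_E n a = Inl ` {..<n} \<union> Inr ` ({..<n} \<times> {..<a})"

fun mwheel_ends :: "nat \<Rightarrow> (nat + nat \<times> nat) \<Rightarrow> nat option set" where
  "mwheel_ends n (Inl j) = {Some j, Some ((j + 1) mod n)}"
| "mwheel_ends n (Inr (j, k)) = {None, Some j}"

fun Wpoly :: "nat \<Rightarrow> int \<Rightarrow> int" where
  "Wpoly 0 x = 1"
| "Wpoly (Suc 0) x = x + 4"
| "Wpoly (Suc (Suc n)) x = (x + 2) * Wpoly (Suc n) x - Wpoly n x + 2"

fun lucas :: "nat \<Rightarrow> int" where
  "lucas 0 = 2"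
| "lucas (Suc 0) = 1"
| "lucas (Suc (Suc k)) = lucas (Suc k) + lucas k"

end

theory Submission
  imports Defs "HOL-Number_Theory.Cong"
begin

text \<open>Record whether each rim edge is in T and which spokes at each rim vertex are in T.
  Cutting the rim at the missing rim edges splits it into arcs, and T is a spanning tree
  exactly when at least one rim edge is missing and every arc carries exactly one spoke of T.
  Reading the rim once around, this condition is checked by an automaton whose state (0 or 1)
  is the number of spokes met so far in the current arc; the spanning trees correspond to the
  closed runs of length n, apart from the complete rim without spokes, which is closed from
  both states. With the transfer matrix A = [[a + 1, a], [1, 1]] their number is
  tr (A^n) - 2, and since tr A = a + 2 and det A = 1 the traces t_n satisfy
  t_(n+2) = (a + 2) t_(n+1) - t_n, the recurrence that gives t_(n+1) - 2 = a W_n(a);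
  for a = 1 this is the recurrence L_(2n+4) = 3 L_(2n+2) - L_(2n).\<close>

section \<open>Separation in multigraphs\<close>

definition closed_under_edges :: "('e \<Rightarrow> 'v set) \<Rightarrow> 'e set \<Rightarrow> 'v set \<Rightarrow> bool" where
  "closed_under_edges ends F X \<longleftrightarrow> (\<forall>e\<in>F. ends e \<subseteq> X \<or> ends e \<inter> X = {})"

lemma reachable_sym:
  assumes "(u, v) \<in> (adj_rel ends F)\<^sup>*"
  shows "(v, u) \<in> (adj_rel ends F)\<^sup>*"
proof -
  have "sym (adj_rel ends F)"
    unfolding adj_rel_def sym_def by (auto simp: insert_commute)
  from symD[OF sym_rtrancl[OF this] assms] show ?thesis .
qed

lemma edge_reachable: "e \<in> F \<Longrightarrow> ends e = {u, v} \<Longrightarrow> (u, v) \<in> (adj_rel ends F)\<^sup>*"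
  unfolding adj_rel_def by blast

lemma reachable_closed:
  assumes "closed_under_edges ends F X" "(u, v) \<in> (adj_rel ends F)\<^sup>*" "u \<in> X"
  shows "v \<in> X"
  using assms(2,3)
proof (induction rule: rtrancl_induct)
  case (step w v)
  then obtain e where "e \<in> F" "ends e = {w, v}" unfolding adj_rel_def by blast
  then show ?case using assms(1) step.IH[OF step.prems] unfolding closed_under_edges_def by blast
qed

lemma not_reachable_if_separated:
  assumes "closed_under_edges ends F X" "p \<in> X" "q \<notin> X" "{u, v} = {p, q}"
  shows "(u, v) \<notin> (adj_rel ends F)\<^sup>*"
proof
  assume uv: "(u, v) \<in> (adj_rel ends F)\<^sup>*"
  from assms(4) consider "u = p" "v = q" | "u = q" "v = p" by (auto simp: doubleton_eq_iff)
  then show False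
    using reachable_closed[OF assms(1)] reachable_sym[OF uv] uv assms(2,3) by cases metis+
qed

section \<open>Arcs of a cyclic sequence of links\<close>

locale cut_cycle =
  fixes n :: nat and link :: "nat \<Rightarrow> bool"
  assumes cut_exists: "\<exists>m<n. \<not> link m"
begin

definition cut_dist :: "nat \<Rightarrow> nat" where
  "cut_dist j = (LEAST k. \<not> link ((j + k) mod n))"

definition next_cut :: "nat \<Rightarrow> nat" where
  "next_cut j = (j + cut_dist j) mod n"

definition arc :: "nat \<Rightarrow> nat set" where
  "arc j = {l. l < n \<and> next_cut l = next_cut j}"

lemma n_pos: "0 < n"
  using cut_exists by auto

lemma cut_ahead: "\<exists>k<n. \<not> link ((j + k) mod n)"
proof -
  obtain m where m: "m < n" "\<not> link m" using cut_exists by blast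
  have "j + (n - j mod n + m) = j div n * n + n + m"
    using mod_less_divisor[OF n_pos, of j] div_mult_mod_eq[of j n] by arith
  also have "\<dots> = m + (j div n + 1) * n"
    by (simp add: algebra_simps)
  finally have "(j + (n - j mod n + m) mod n) mod n = (m + (j div n + 1) * n) mod n"
    by (simp only: mod_add_right_eq)
  also have "\<dots> = m"
    using m(1) by (simp only: mod_mult_self1 mod_less)
  finally show ?thesis
    using m(2) n_pos by (intro exI[of _ "(n - j mod n + m) mod n"]) simp
qed

lemma cut_dist_less: "cut_dist j < n"
proof -
  obtain k where "k < n" "\<not> link ((j + k) mod n)" using cut_ahead by blast
  then show ?thesis unfolding cut_dist_def by (meson Least_le le_less_trans)
qed

lemma not_link_next_cut: "\<not> link (next_cut j)"
proof -
  have "\<exists>k. \<not> link ((j + k) mod n)" using cut_ahead by blast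
  then show ?thesis unfolding next_cut_def cut_dist_def by (rule LeastI_ex)
qed

lemma link_before_cut: "k < cut_dist j \<Longrightarrow> link ((j + k) mod n)"
  unfolding cut_dist_def using not_less_Least by blast

lemma next_cut_less: "next_cut j < n"
  unfolding next_cut_def using n_pos by simp

lemma cut_dist_not_link: "j < n \<Longrightarrow> \<not> link j \<Longrightarrow> cut_dist j = 0"
  unfolding cut_dist_def by (simp add: Least_eq_0)

lemma next_cut_not_link: "j < n \<Longrightarrow> \<not> link j \<Longrightarrow> next_cut j = j"
  unfolding next_cut_def by (simp add: cut_dist_not_link)

lemma cut_dist_link:
  assumes "j < n" "link j"
  shows "cut_dist j = Suc (cut_dist ((j + 1) mod n))"
  unfolding cut_dist_def
proof (rule Least_Suc2)
  show "\<not> link ((j + cut_dist j) mod n)" "\<not> link (((j + 1) mod n + cut_dist ((j + 1) mod n)) mod n)"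
    using not_link_next_cut unfolding next_cut_def by blast+
  show "\<not> \<not> link ((j + 0) mod n)" using assms by simp
  show "\<forall>k. (\<not> link ((j + Suc k) mod n)) = (\<not> link (((j + 1) mod n + k) mod n))"
    by (simp add: mod_add_left_eq)
qed

lemma next_cut_link: "j < n \<Longrightarrow> link j \<Longrightarrow> next_cut j = next_cut ((j + 1) mod n)"
  unfolding next_cut_def by (simp add: cut_dist_link mod_add_left_eq)

lemma next_cut_next_cut: "next_cut (next_cut j) = next_cut j"
  using next_cut_not_link[OF next_cut_less not_link_next_cut] .

lemma arc_link: "l < n \<Longrightarrow> link l \<Longrightarrow> l \<in> arc j \<longleftrightarrow> (l + 1) mod n \<in> arc j"
  unfolding arc_def using n_pos by (simp add: next_cut_link)

lemma inj_on_cut_dist: "inj_on cut_dist (arc j)"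
proof (rule inj_onI)
  fix l l' assume "l \<in> arc j" "l' \<in> arc j" "cut_dist l = cut_dist l'"
  then have "[l + cut_dist l = l' + cut_dist l] (mod n)" and "l < n" "l' < n"
    unfolding arc_def next_cut_def cong_def by auto
  then show "l = l'" unfolding cong_add_rcancel_nat by (simp add: cong_def)
qed

lemma along_arc:
  "j < n \<Longrightarrow> k \<le> cut_dist j \<Longrightarrow>
     next_cut ((j + k) mod n) = next_cut j \<and> cut_dist ((j + k) mod n) = cut_dist j - k"
proof (induction k)
  case (Suc k)
  let ?l = "(j + k) mod n"
  have "?l < n" "link ?l" using Suc.prems n_pos link_before_cut by auto
  moreover have "(?l + 1) mod n = (j + Suc k) mod n" by (simp add: mod_Suc_eq)
  moreover have "next_cut ?l = next_cut j" "cut_dist ?l = cut_dist j - k"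
    using Suc by simp_all
  ultimately show ?case
    using cut_dist_link[of ?l] next_cut_link[of ?l] by simp
qed simp

text \<open>The successor of a missing link starts its arc.\<close>
lemma cut_dist_le_after_cut:
  assumes "l < n" "\<not> link l" "j \<in> arc ((l + 1) mod n)"
  shows "cut_dist j \<le> cut_dist ((l + 1) mod n)"
proof (rule ccontr)
  let ?s = "(l + 1) mod n"
  assume "\<not> ?thesis"
  then obtain k where k: "cut_dist j = Suc (cut_dist ?s + k)"
    using less_imp_Suc_add by fastforce
  have j: "j < n" using assms(3) unfolding arc_def by simp
  have "(j + Suc k) mod n \<in> arc ?s" "cut_dist ((j + Suc k) mod n) = cut_dist ?s"
    using along_arc[OF j, of "Suc k"] assms(3) k n_pos unfolding arc_def by auto
  moreover have "?s \<in> arc ?s" unfolding arc_def using n_pos by simp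
  ultimately have "(j + Suc k) mod n = ?s"
    using inj_on_cut_dist by (blast dest: inj_onD)
  then have "(j + k) mod n = l mod n"
    using cong_add_rcancel_nat[of "j + k" 1 l n] by (simp add: cong_def)
  moreover have "link ((j + k) mod n)" using link_before_cut k by simp
  ultimately show False using assms(1,2) by simp
qed

definition arc_prefix :: "nat \<Rightarrow> nat set" where
  "arc_prefix i = {l \<in> arc i. cut_dist i \<le> cut_dist l}"

lemma arc_prefix_link:
  assumes "l < n" "link l" "l \<noteq> i" "i < n"
  shows "l \<in> arc_prefix i \<longleftrightarrow> (l + 1) mod n \<in> arc_prefix i"
proof (cases "l \<in> arc i")
  case True
  have "i \<in> arc i" using assms(4) unfolding arc_def by simp
  then have "cut_dist l \<noteq> cut_dist i"
    using inj_onD[OF inj_on_cut_dist _ True] assms(3) by blast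
  then show ?thesis
    using True arc_link[OF assms(1,2)] cut_dist_link[OF assms(1,2)] unfolding arc_prefix_def by auto
next
  case False
  then show ?thesis using arc_link[OF assms(1,2)] unfolding arc_prefix_def by auto
qed

lemma arc_prefix_last:
  assumes "i < n" "link i"
  shows "i \<in> arc_prefix i" "(i + 1) mod n \<in> arc i - arc_prefix i"
  using assms arc_link[OF assms] cut_dist_link[OF assms] unfolding arc_prefix_def arc_def by auto

end

section \<open>Closed runs of the arc automaton\<close>

fun step :: "nat \<Rightarrow> bool \<times> 'a set \<Rightarrow> nat option" where
  "step \<sigma> (linked, S) =
     (if \<sigma> + card S \<le> 1 \<and> (linked \<or> \<sigma> + card S = 1)
      then Some (if linked then \<sigma> + card S else 0) else None)"

fun run :: "nat \<Rightarrow> (bool \<times> 'a set) list \<Rightarrow> nat option" where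
  "run \<sigma> [] = Some \<sigma>"
| "run \<sigma> (x # xs) = Option.bind (step \<sigma> x) (\<lambda>\<sigma>'. run \<sigma>' xs)"

lemma run_append: "run \<sigma> (xs @ ys) = Option.bind (run \<sigma> xs) (\<lambda>\<sigma>'. run \<sigma>' ys)"
  by (induction xs arbitrary: \<sigma>) auto

lemma run_map_upt_iff:
  "run \<sigma> (map f [0..<m]) = Some \<sigma>' \<longleftrightarrow>
     (\<exists>\<tau>. \<tau> 0 = \<sigma> \<and> \<tau> m = \<sigma>' \<and> (\<forall>l<m. step (\<tau> l) (f l) = Some (\<tau> (Suc l))))"
proof (induction m arbitrary: \<sigma>')
  case 0
  show ?case by (auto intro: exI[of _ "\<lambda>_. \<sigma>"])
next
  case (Suc m)
  have "run \<sigma> (map f [0..<Suc m]) = Some \<sigma>' \<longleftrightarrow>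
          (\<exists>\<sigma>''. run \<sigma> (map f [0..<m]) = Some \<sigma>'' \<and> step \<sigma>'' (f m) = Some \<sigma>')"
    by (simp add: run_append bind_eq_Some_conv)
  also have "\<dots> \<longleftrightarrow> (\<exists>\<tau>. \<tau> 0 = \<sigma> \<and> \<tau> (Suc m) = \<sigma>' \<and> (\<forall>l<Suc m. step (\<tau> l) (f l) = Some (\<tau> (Suc l))))"
  proof
    assume "\<exists>\<sigma>''. run \<sigma> (map f [0..<m]) = Some \<sigma>'' \<and> step \<sigma>'' (f m) = Some \<sigma>'"
    then obtain \<sigma>'' where "run \<sigma> (map f [0..<m]) = Some \<sigma>''" and last: "step \<sigma>'' (f m) = Some \<sigma>'"
      by blast
    then obtain \<tau> where \<tau>: "\<tau> 0 = \<sigma>" "\<tau> m = \<sigma>''" "\<forall>l<m. step (\<tau> l) (f l) = Some (\<tau> (Suc l))"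
      unfolding Suc.IH by blast
    define \<tau>' where "\<tau>' = \<tau>(Suc m := \<sigma>')"
    have "step (\<tau>' l) (f l) = Some (\<tau>' (Suc l))" if "l < Suc m" for l
      using that \<tau> last unfolding \<tau>'_def by (cases "l = m") simp_all
    then show "\<exists>\<tau>. \<tau> 0 = \<sigma> \<and> \<tau> (Suc m) = \<sigma>' \<and> (\<forall>l<Suc m. step (\<tau> l) (f l) = Some (\<tau> (Suc l)))"
      using \<tau>(1) by (intro exI[of _ \<tau>']) (simp add: \<tau>'_def)
  next
    assume "\<exists>\<tau>. \<tau> 0 = \<sigma> \<and> \<tau> (Suc m) = \<sigma>' \<and> (\<forall>l<Suc m. step (\<tau> l) (f l) = Some (\<tau> (Suc l)))"
    then obtain \<tau> where \<tau>: "\<tau> 0 = \<sigma>" "\<tau> (Suc m) = \<sigma>'"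
      "\<forall>l<Suc m. step (\<tau> l) (f l) = Some (\<tau> (Suc l))"
      by blast
    then have "run \<sigma> (map f [0..<m]) = Some (\<tau> m)"
      unfolding Suc.IH by (intro exI[of _ \<tau>]) simp
    then show "\<exists>\<sigma>''. run \<sigma> (map f [0..<m]) = Some \<sigma>'' \<and> step \<sigma>'' (f m) = Some \<sigma>'"
      using \<tau> by auto
  qed
  finally show ?case .
qed

context cut_cycle
begin

lemma cyclic_pred:
  assumes "l < n"
  shows "\<exists>p<n. (p + 1) mod n = l"
proof (cases l)
  case 0
  then show ?thesis using n_pos by (intro exI[of _ "n - 1"]) simp
next
  case (Suc p)
  then show ?thesis using assms by (intro exI[of _ p]) simp
qed

definition weight_before :: "(nat \<Rightarrow> 'a set) \<Rightarrow> nat \<Rightarrow> nat" where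
  "weight_before s l = (\<Sum>l'\<in>{l' \<in> arc l. cut_dist l < cut_dist l'}. card (s l'))"

lemma weight_before_add:
  assumes "l < n"
  shows "weight_before s l + card (s l) = (\<Sum>l'\<in>{l' \<in> arc l. cut_dist l \<le> cut_dist l'}. card (s l'))"
proof -
  have l: "l \<in> arc l" using assms unfolding arc_def by simp
  then have "l' = l" if "l' \<in> arc l" "cut_dist l' = cut_dist l" for l'
    using inj_onD[OF inj_on_cut_dist that(2)] that(1) by blast
  with l have "{l' \<in> arc l. cut_dist l \<le> cut_dist l'} = insert l {l' \<in> arc l. cut_dist l < cut_dist l'}"
    by (auto simp: le_less)
  moreover have "finite (arc l)" unfolding arc_def by simp
  ultimately show ?thesis unfolding weight_before_def by simp
qed

lemma weight_before_link:
  assumes "l < n" "link l"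
  shows "weight_before s ((l + 1) mod n) = weight_before s l + card (s l)"
proof -
  have "arc ((l + 1) mod n) = arc l"
    unfolding arc_def using next_cut_link[OF assms] by simp
  then have "weight_before s ((l + 1) mod n) = (\<Sum>l'\<in>{l' \<in> arc l. cut_dist l \<le> cut_dist l'}. card (s l'))"
    unfolding weight_before_def cut_dist_link[OF assms] by (simp add: Suc_le_eq)
  then show ?thesis
    using weight_before_add[OF assms(1), where s = s] by simp
qed

lemma weight_before_after_cut:
  assumes "l < n" "\<not> link l"
  shows "weight_before s ((l + 1) mod n) = 0"
proof -
  from assms have "{l' \<in> arc ((l + 1) mod n). cut_dist ((l + 1) mod n) < cut_dist l'} = {}"
    by (auto dest: cut_dist_le_after_cut)
  then show ?thesis by (simp only: weight_before_def sum.empty)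
qed

lemma weight_before_at_cut:
  "l < n \<Longrightarrow> \<not> link l \<Longrightarrow> weight_before s l + card (s l) = (\<Sum>l'\<in>arc l. card (s l'))"
  by (simp add: weight_before_add cut_dist_not_link)

lemma closed_run_if_arc_weights:
  assumes arcs: "\<forall>j<n. (\<Sum>l\<in>arc j. card (s l)) = 1"
  shows "run (weight_before s 0) (map (\<lambda>j. (link j, s j)) [0..<n]) = Some (weight_before s 0)"
proof -
  define \<tau> where "\<tau> l = weight_before s (l mod n)" for l
  have "step (\<tau> l) (link l, s l) = Some (\<tau> (Suc l))" if l: "l < n" for l
  proof -
    have \<tau>: "\<tau> l = weight_before s l" "\<tau> (Suc l) = weight_before s ((l + 1) mod n)"
      unfolding \<tau>_def using l by simp_all
    have le: "weight_before s l + card (s l) \<le> 1"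
    proof -
      have "weight_before s l + card (s l) \<le> (\<Sum>l'\<in>arc l. card (s l'))"
        unfolding weight_before_add[OF l] arc_def by (intro sum_mono2) auto
      then show ?thesis using arcs l by simp
    qed
    show ?thesis
    proof (cases "link l")
      case True
      then show ?thesis using \<tau> le weight_before_link[OF l True, where s = s] by simp
    next
      case False
      then show ?thesis
        using \<tau> arcs l weight_before_at_cut[OF l False, where s = s] weight_before_after_cut[OF l False]
        by simp
    qed
  qed
  moreover have "\<tau> n = \<tau> 0" unfolding \<tau>_def by simp
  ultimately show ?thesis
    unfolding run_map_upt_iff by (intro exI[of _ \<tau>]) (simp add: \<tau>_def)
qed

text \<open>A closed run is forced: going backwards from a position, the state is reset to 0 at
  the preceding missing link.\<close>
lemma closed_run_states:
  assumes closed: "\<tau> n = \<tau> 0"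
    and steps: "\<forall>l<n. step (\<tau> l) (link l, s l) = Some (\<tau> (Suc l))"
    and "l < n"
  shows "\<tau> l = weight_before s l"
  using \<open>l < n\<close>
proof (induction "n - cut_dist l" arbitrary: l rule: less_induct)
  case less
  obtain p where p: "p < n" "(p + 1) mod n = l" using cyclic_pred[OF less.prems] by blast
  have "\<tau> (Suc p) = \<tau> l"
  proof (cases "Suc p = n")
    case True
    then show ?thesis using p(2) closed by simp
  next
    case False
    then show ?thesis using p by simp
  qed
  then have step_p: "step (\<tau> p) (link p, s p) = Some (\<tau> l)" using steps p(1) by simp
  show ?case
  proof (cases "link p")
    case True
    have "n - cut_dist p < n - cut_dist l"
      using cut_dist_link[OF p(1) True] cut_dist_less[of p] p(2) by simp
    then have "\<tau> p = weight_before s p" using less.hyps p(1) by blast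
    then show ?thesis
      using step_p True weight_before_link[OF p(1) True, of s] p(2) by (auto split: if_splits)
  next
    case False
    then show ?thesis
      using step_p weight_before_after_cut[OF p(1) False] p(2) by (auto split: if_splits)
  qed
qed

lemma arc_weights_if_closed_run:
  assumes closed: "\<tau> n = \<tau> 0"
    and steps: "\<forall>l<n. step (\<tau> l) (link l, s l) = Some (\<tau> (Suc l))"
    and "j < n"
  shows "(\<Sum>l\<in>arc j. card (s l)) = 1"
proof -
  let ?m = "next_cut j"
  have m: "?m < n" "\<not> link ?m" using next_cut_less not_link_next_cut by auto
  have "\<tau> ?m + card (s ?m) = 1"
    using steps m by (auto split: if_splits)
  moreover have "arc ?m = arc j" unfolding arc_def by (simp add: next_cut_next_cut)
  ultimately show ?thesis
    using closed_run_states[OF closed steps m(1)] weight_before_at_cut[OF m, where s = s] by simp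
qed

theorem closed_run_iff_arc_weights:
  "(\<exists>\<sigma>. run \<sigma> (map (\<lambda>j. (link j, s j)) [0..<n]) = Some \<sigma>) \<longleftrightarrow>
     (\<forall>j<n. (\<Sum>l\<in>arc j. card (s l)) = 1)"
proof
  assume "\<exists>\<sigma>. run \<sigma> (map (\<lambda>j. (link j, s j)) [0..<n]) = Some \<sigma>"
  then obtain \<tau> where "\<tau> n = \<tau> 0" "\<forall>l<n. step (\<tau> l) (link l, s l) = Some (\<tau> (Suc l))"
    unfolding run_map_upt_iff by auto
  then show "\<forall>j<n. (\<Sum>l\<in>arc j. card (s l)) = 1"
    using arc_weights_if_closed_run by blast
qed (use closed_run_if_arc_weights in blast)

end

section \<open>Counting closed runs with a transfer matrix\<close>

definition local_choices :: "nat \<Rightarrow> (bool \<times> nat set) set" where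
  "local_choices a = UNIV \<times> Pow {..<a}"

definition configs :: "nat \<Rightarrow> nat \<Rightarrow> (bool \<times> nat set) list set" where
  "configs m a = {xs. length xs = m \<and> set xs \<subseteq> local_choices a}"

definition walks :: "nat \<Rightarrow> nat \<Rightarrow> nat \<Rightarrow> nat \<Rightarrow> (bool \<times> nat set) list set" where
  "walks m a i j = {xs \<in> configs m a. run i xs = Some j}"

definition transfer :: "int \<Rightarrow> nat \<Rightarrow> nat \<Rightarrow> int" where
  "transfer x i j = (if i = 0 then (if j = 0 then x + 1 else x) else 1)"

fun transfer_pow :: "int \<Rightarrow> nat \<Rightarrow> nat \<Rightarrow> nat \<Rightarrow> int" where
  "transfer_pow x 0 i j = (if i = j then 1 else 0)"
| "transfer_pow x (Suc m) i j = transfer x i 0 * transfer_pow x m 0 j + transfer x i 1 * transfer_pow x m 1 j"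

lemma finite_local_choices: "finite (local_choices a)"
  unfolding local_choices_def by simp

lemma finite_configs: "finite (configs m a)"
  using finite_lists_length_eq[OF finite_local_choices, of a m]
  unfolding configs_def by (simp add: conj_commute)

lemma step_le_1: "step \<sigma> c = Some \<sigma>' \<Longrightarrow> \<sigma>' \<le> 1"
  by (cases c) (auto split: if_splits)

lemma step_choice_cases:
  assumes "(b, S) \<in> local_choices a" "step i (b, S) = Some j"
  obtains "S = {}" | k where "k < a" "S = {k}"
proof -
  have "finite S" "S \<subseteq> {..<a}" using assms(1) unfolding local_choices_def by (auto intro: finite_subset)
  moreover have "card S \<le> 1" using assms(2) by (auto split: if_splits)
  ultimately consider "card S = 0" | "card S = 1" by linarith
  then show ?thesis
  proof cases
    case 1
    then show ?thesis using \<open>finite S\<close> that(1) by simp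
  next
    case 2
    then obtain k where "S = {k}" by (auto simp: card_1_singleton_iff)
    then show ?thesis using \<open>S \<subseteq> {..<a}\<close> that(2) by simp
  qed
qed

lemma card_step_choices:
  assumes "i \<le> 1" "j \<le> 1"
  shows "int (card {c \<in> local_choices a. step i c = Some j}) = transfer (int a) i j"
proof -
  let ?C = "{c \<in> local_choices a. step i c = Some j}"
  have choices: "(b, {}) \<in> local_choices a" "k < a \<Longrightarrow> (b, {k}) \<in> local_choices a" for b k
    unfolding local_choices_def by auto
  have C: "c \<in> ?C \<longleftrightarrow> (\<exists>b. c = (b, {}) \<and> step i (b, {} :: nat set) = Some j) \<or>
      (\<exists>b k. k < a \<and> c = (b, {k}) \<and> step i (b, {k}) = Some j)" (is "_ \<longleftrightarrow> ?small c") for c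
  proof
    assume "c \<in> ?C"
    then obtain b S where c: "c = (b, S)" "(b, S) \<in> local_choices a" "step i (b, S) = Some j"
      by (cases c) auto
    from c(2,3) show "?small c"
      by (cases rule: step_choice_cases) (use c in auto)
  qed (use choices in auto)
  have singletons: "card ((\<lambda>k. (b, {k})) ` {..<a}) = a" for b :: bool
    by (subst card_image) (auto simp: inj_on_def)
  consider "i = 0" "j = 0" | "i = 0" "j = 1" | "i = 1" "j = 0" | "i = 1" "j = 1"
    using assms by linarith
  then show ?thesis
  proof cases
    case 1
    then have "?C = insert (True, {}) ((\<lambda>k. (False, {k})) ` {..<a})"
      unfolding set_eq_iff C by auto
    moreover have "(True, {}) \<notin> (\<lambda>k. (False, {k})) ` {..<a}" by auto
    ultimately show ?thesis using 1 singletons by (simp add: transfer_def)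
  next
    case 2
    then have "?C = (\<lambda>k. (True, {k})) ` {..<a}"
      unfolding set_eq_iff C by auto
    then show ?thesis using 2 singletons by (simp add: transfer_def)
  next
    case 3
    then have "?C = {(False, {})}"
      unfolding set_eq_iff C by auto
    then show ?thesis using 3 by (simp add: transfer_def)
  next
    case 4
    then have "?C = {(True, {})}"
      unfolding set_eq_iff C by auto
    then show ?thesis using 4 by (simp add: transfer_def)
  qed
qed

lemma walks_Suc:
  "walks (Suc m) a i j = (\<lambda>(c, xs). c # xs) `
     (\<Union>\<sigma>\<in>{0, 1}. {c \<in> local_choices a. step i c = Some \<sigma>} \<times> walks m a \<sigma> j)"
proof (rule set_eqI)
  fix ys
  show "ys \<in> walks (Suc m) a i j \<longleftrightarrow> ys \<in> (\<lambda>(c, xs). c # xs) `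
     (\<Union>\<sigma>\<in>{0, 1}. {c \<in> local_choices a. step i c = Some \<sigma>} \<times> walks m a \<sigma> j)"
  proof (cases ys)
    case (Cons c xs)
    have "step i c = Some \<sigma> \<Longrightarrow> \<sigma> \<in> {0, 1}" for \<sigma>
      using step_le_1 by fastforce
    then show ?thesis
      unfolding Cons walks_def configs_def by (auto simp: bind_eq_Some_conv)
  qed (auto simp: walks_def configs_def)
qed

lemma card_walks: "i \<le> 1 \<Longrightarrow> j \<le> 1 \<Longrightarrow> int (card (walks m a i j)) = transfer_pow (int a) m i j"
proof (induction m arbitrary: i)
  case 0
  have "walks 0 a i j = (if i = j then {[]} else {})"
    unfolding walks_def configs_def by auto
  then show ?case by simp
next
  case (Suc m)
  let ?B = "\<lambda>\<sigma>. {c \<in> local_choices a. step i c = Some \<sigma>} \<times> walks m a \<sigma> j"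
  have "card (walks (Suc m) a i j) = card (\<Union>\<sigma>\<in>{0, 1}. ?B \<sigma>)"
    unfolding walks_Suc by (rule card_image) (auto simp: inj_on_def)
  also have "\<dots> = card (?B 0) + card (?B 1)"
    using finite_local_choices finite_configs
    by (subst card_UN_disjoint) (auto simp: walks_def)
  finally show ?case
    using Suc card_step_choices[OF Suc.prems(1)] by (simp add: card_cartesian_product)
qed

lemma run_le_1: "xs \<noteq> [] \<Longrightarrow> run \<sigma> xs = Some \<sigma>' \<Longrightarrow> \<sigma>' \<le> 1"
proof (induction xs arbitrary: \<sigma>)
  case (Cons c xs)
  then show ?case
    by (cases xs) (auto simp: bind_eq_Some_conv dest: step_le_1)
qed simp

text \<open>A missing link resets the state to 0, so from there on runs from different states agree.\<close>
lemma run_eq_after_cut: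
  "\<exists>c\<in>set xs. \<not> fst c \<Longrightarrow> run \<sigma> xs = Some \<sigma>' \<Longrightarrow> run \<tau> xs = Some \<tau>' \<Longrightarrow> \<sigma>' = \<tau>'"
proof (induction xs arbitrary: \<sigma> \<tau>)
  case (Cons c xs)
  obtain \<sigma>1 \<tau>1 where "step \<sigma> c = Some \<sigma>1" "run \<sigma>1 xs = Some \<sigma>'" "step \<tau> c = Some \<tau>1" "run \<tau>1 xs = Some \<tau>'"
    using Cons.prems by (auto simp: bind_eq_Some_conv)
  then show ?case
    using Cons by (cases c) (auto split: if_splits)
qed simp

lemma run_all_linked:
  "\<forall>c\<in>set xs. fst c \<Longrightarrow> run \<sigma> xs = Some \<sigma>' \<Longrightarrow> \<sigma>' = \<sigma> + (\<Sum>c\<leftarrow>xs. card (snd c))"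
proof (induction xs arbitrary: \<sigma>)
  case (Cons c xs)
  then obtain \<sigma>1 where "step \<sigma> c = Some \<sigma>1" "run \<sigma>1 xs = Some \<sigma>'" "fst c"
    by (auto simp: bind_eq_Some_conv)
  then have "\<sigma>1 = \<sigma> + card (snd c)" "\<sigma>' = \<sigma>1 + (\<Sum>c\<leftarrow>xs. card (snd c))"
    using Cons by (cases c; auto split: if_splits)+
  then show ?case by simp
qed simp

lemma run_replicate: "\<sigma> \<le> 1 \<Longrightarrow> run \<sigma> (replicate m (True, {})) = Some \<sigma>"
  by (induction m) auto

lemma closed_walk_all_linked:
  assumes "xs \<in> configs m a" "\<forall>c\<in>set xs. fst c" "run \<sigma> xs = Some \<sigma>"
  shows "xs = replicate m (True, {})"
proof -
  have "\<forall>c\<in>set xs. card (snd c) = 0"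
    using run_all_linked[OF assms(2,3)] by simp
  moreover have "\<forall>c\<in>set xs. snd c \<subseteq> {..<a}"
    using assms(1) unfolding configs_def local_choices_def by (auto simp: subset_eq mem_Times_iff)
  then have "\<forall>c\<in>set xs. finite (snd c)"
    using finite_subset by blast
  ultimately have "\<forall>c\<in>set xs. c = (True, {})"
    using assms(2) by (auto simp: prod_eq_iff)
  then have "replicate (length xs) (True, {}) = xs"
    by (rule replicate_length_same)
  then show ?thesis
    using assms(1) unfolding configs_def by simp
qed

definition tree_codes :: "nat \<Rightarrow> nat \<Rightarrow> (bool \<times> nat set) list set" where
  "tree_codes m a = {xs \<in> configs m a. (\<exists>c\<in>set xs. \<not> fst c) \<and> (\<exists>\<sigma>. run \<sigma> xs = Some \<sigma>)}"

lemma closed_walks_inter: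
  "walks m a 0 0 \<inter> walks m a 1 1 = {replicate m (True, {})}"
proof (intro equalityI subsetI)
  fix xs assume "xs \<in> walks m a 0 0 \<inter> walks m a 1 1"
  then have xs: "xs \<in> configs m a" "run 0 xs = Some 0" "run 1 xs = Some 1"
    unfolding walks_def by auto
  then have "\<forall>c\<in>set xs. fst c"
    using run_eq_after_cut[of xs 0 0 1 1] by auto
  then show "xs \<in> {replicate m (True, {})}"
    using closed_walk_all_linked[OF xs(1) _ xs(2)] by simp
qed (auto simp: walks_def configs_def local_choices_def run_replicate)

lemma closed_walks_union:
  "walks m a 0 0 \<union> walks m a 1 1 = insert (replicate m (True, {})) (tree_codes m a)"
proof (intro equalityI subsetI)
  fix xs assume "xs \<in> walks m a 0 0 \<union> walks m a 1 1"
  then obtain \<sigma> where xs: "xs \<in> configs m a" "run \<sigma> xs = Some \<sigma>"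
    unfolding walks_def by auto
  show "xs \<in> insert (replicate m (True, {})) (tree_codes m a)"
  proof (cases "\<forall>c\<in>set xs. fst c")
    case True
    then show ?thesis using closed_walk_all_linked[OF xs(1) True xs(2)] by simp
  next
    case False
    then show ?thesis using xs unfolding tree_codes_def by auto
  qed
next
  fix xs assume xs: "xs \<in> insert (replicate m (True, {})) (tree_codes m a)"
  show "xs \<in> walks m a 0 0 \<union> walks m a 1 1"
  proof (cases "xs = replicate m (True, {})")
    case False
    then obtain \<sigma> where code: "xs \<in> configs m a" "\<exists>c\<in>set xs. \<not> fst c" "run \<sigma> xs = Some \<sigma>"
      using xs unfolding tree_codes_def by auto
    then have "xs \<noteq> []" by auto
    then have "\<sigma> = 0 \<or> \<sigma> = 1"
      using run_le_1[OF _ code(3)] by arith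
    then show ?thesis using code unfolding walks_def by auto
  qed (auto simp: walks_def configs_def local_choices_def run_replicate)
qed

definition transfer_trace :: "int \<Rightarrow> nat \<Rightarrow> int" where
  "transfer_trace x m = transfer_pow x m 0 0 + transfer_pow x m 1 1"

lemma card_tree_codes: "int (card (tree_codes m a)) = transfer_trace (int a) m - 2"
proof -
  have "replicate m (True, {}) \<notin> tree_codes m a"
    unfolding tree_codes_def by simp
  moreover have "finite (walks m a i j)" for i j
    using finite_configs unfolding walks_def by simp
  moreover have "finite (tree_codes m a)"
    using finite_configs unfolding tree_codes_def by simp
  ultimately have "card (walks m a 0 0) + card (walks m a 1 1) = card (tree_codes m a) + 2"
    using card_Un_Int[of "walks m a 0 0" "walks m a 1 1"]
    unfolding closed_walks_inter closed_walks_union by simp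
  then show ?thesis
    using card_walks[of 0 0 m a] card_walks[of 1 1 m a] unfolding transfer_trace_def by simp
qed

section \<open>Recurrences for the trace of the transfer matrix\<close>

text \<open>Cayley--Hamilton for the transfer matrix, whose trace is x + 2 and whose determinant is 1.\<close>
lemma transfer_pow_Suc_Suc:
  "i \<le> 1 \<Longrightarrow> transfer_pow x (Suc (Suc m)) i j = (x + 2) * transfer_pow x (Suc m) i j - transfer_pow x m i j"
  by (cases i) (auto simp: transfer_def algebra_simps)

lemma transfer_trace_Suc_Suc:
  "transfer_trace x (Suc (Suc m)) = (x + 2) * transfer_trace x (Suc m) - transfer_trace x m"
  unfolding transfer_trace_def by (simp add: transfer_pow_Suc_Suc algebra_simps del: transfer_pow.simps)

lemma transfer_trace_Suc_eq_Wpoly: "transfer_trace x (Suc m) - 2 = x * Wpoly m x"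
proof (induction m rule: induct_nat_012)
  case (ge2 m)
  have "transfer_trace x (Suc (Suc (Suc m))) =
      (x + 2) * transfer_trace x (Suc (Suc m)) - transfer_trace x (Suc m)"
    by (rule transfer_trace_Suc_Suc)
  also have "\<dots> = (x + 2) * (x * Wpoly (Suc m) x + 2) - (x * Wpoly m x + 2)"
  proof -
    have "transfer_trace x (Suc m) = x * Wpoly m x + 2"
      "transfer_trace x (Suc (Suc m)) = x * Wpoly (Suc m) x + 2"
      using ge2 by linarith+
    then show ?thesis by (simp only:)
  qed
  finally show ?case by (simp add: algebra_simps)
qed (simp_all add: transfer_trace_def transfer_def algebra_simps)

lemma transfer_trace_1_eq_lucas: "transfer_trace 1 m = lucas (2 * m)"
proof (induction m rule: induct_nat_012)
  case (ge2 m)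
  have "lucas (2 * Suc (Suc m)) = 3 * lucas (2 * Suc m) - lucas (2 * m)"
    by (simp add: numeral_eq_Suc)
  then show ?case
    using ge2 by (simp add: transfer_trace_Suc_Suc)
qed (simp_all add: transfer_trace_def transfer_def numeral_eq_Suc)

section \<open>Spanning trees of the modified wheel\<close>

lemma closed_under_wheel_edges:
  assumes "\<forall>l. Inl l \<in> F \<longrightarrow> (l \<in> X \<longleftrightarrow> (l + 1) mod n \<in> X)"
    and "\<forall>l k. Inr (l, k) \<in> F \<longrightarrow> l \<notin> X"
  shows "closed_under_edges (mwheel_ends n) F (Some ` X)"
  unfolding closed_under_edges_def
proof
  fix e assume "e \<in> F"
  then show "mwheel_ends n e \<subseteq> Some ` X \<or> mwheel_ends n e \<inter> Some ` X = {}"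
    using assms by (cases e) auto
qed

lemma rim_path:
  assumes "j < n" "\<forall>i<k. Inl ((j + i) mod n) \<in> F"
  shows "(Some j, Some ((j + k) mod n)) \<in> (adj_rel (mwheel_ends n) F)\<^sup>*"
  using assms(2)
proof (induction k)
  case 0
  then show ?case using assms(1) by simp
next
  case (Suc k)
  have "mwheel_ends n (Inl ((j + k) mod n)) = {Some ((j + k) mod n), Some ((j + Suc k) mod n)}"
    by (simp add: mod_Suc_eq)
  then have "(Some ((j + k) mod n), Some ((j + Suc k) mod n)) \<in> adj_rel (mwheel_ends n) F"
    using Suc.prems unfolding adj_rel_def by blast
  with Suc show ?case by (simp add: rtrancl_into_rtrancl)
qed

locale wheel_subgraph =
  fixes n a :: nat and T :: "(nat + nat \<times> nat) set"
  assumes two_le_n: "2 \<le> n" and edges: "T \<subseteq> mwheel_E n a"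
begin

abbreviation reach :: "(nat + nat \<times> nat) set \<Rightarrow> (nat option \<times> nat option) set" where
  "reach F \<equiv> (adj_rel (mwheel_ends n) F)\<^sup>*"

abbreviation is_tree :: bool where
  "is_tree \<equiv> spanning_tree (mwheel_V n) (mwheel_E n a) (mwheel_ends n) T"

definition spokes :: "nat \<Rightarrow> nat set" where
  "spokes j = {k. Inr (j, k) \<in> T}"

lemma link_less: "Inl l \<in> T \<Longrightarrow> l < n"
  using edges unfolding mwheel_E_def by auto

lemma spoke_less: "Inr (l, k) \<in> T \<Longrightarrow> l < n \<and> k < a"
  using edges unfolding mwheel_E_def by auto

lemma finite_spokes: "finite (spokes j)"
  using spoke_less unfolding spokes_def by (auto intro: finite_subset[of _ "{..<a}"])

text \<open>The rim cycle of a tree cannot be complete: otherwise the link from 0 to 1 is not a bridge.\<close>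
lemma tree_has_cut:
  assumes is_tree
  shows "\<exists>m<n. Inl m \<notin> T"
proof (rule ccontr)
  assume "\<not> ?thesis"
  then have links: "Inl m \<in> T" if "m < n" for m using that by blast
  have "\<forall>i<n - 1. Inl ((1 + i) mod n) \<in> T - {Inl 0}"
    using links by simp
  then have "(Some 1, Some ((1 + (n - 1)) mod n)) \<in> reach (T - {Inl 0})"
    using two_le_n by (intro rim_path) auto
  then have "(Some 0, Some 1) \<in> reach (T - {Inl 0})"
    using two_le_n by (simp add: reachable_sym)
  moreover have "mwheel_ends n (Inl 0) = {Some 0, Some 1}"
    using two_le_n by simp
  ultimately show False
    using assms links[of 0] two_le_n unfolding spanning_tree_def by auto
qed

end

locale wheel_with_cut = wheel_subgraph +
  assumes cut: "\<exists>m<n. Inl m \<notin> T"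

sublocale wheel_with_cut \<subseteq> cut_cycle n "\<lambda>j. Inl j \<in> T"
  using cut by unfold_locales

context wheel_with_cut
begin

definition arc_spokes :: "nat \<Rightarrow> (nat \<times> nat) set" where
  "arc_spokes j = Sigma (arc j) spokes"

lemma card_arc_spokes: "card (arc_spokes j) = (\<Sum>l\<in>arc j. card (spokes l))"
  unfolding arc_spokes_def using finite_spokes by (simp add: arc_def)

lemma finite_arc_spokes: "finite (arc_spokes j)"
  unfolding arc_spokes_def arc_def using finite_spokes by simp

lemma arc_spokes_iff: "(l, k) \<in> arc_spokes j \<longleftrightarrow> l \<in> arc j \<and> Inr (l, k) \<in> T"
  unfolding arc_spokes_def spokes_def by simp

lemma links_keep_arc: "Inl l \<in> T \<Longrightarrow> l \<in> arc j \<longleftrightarrow> (l + 1) mod n \<in> arc j"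
  using arc_link link_less by blast

lemma reach_cut: "j < n \<Longrightarrow> \<forall>i<n. Inl i \<in> T \<longrightarrow> Inl i \<in> F \<Longrightarrow> (Some j, Some (next_cut j)) \<in> reach F"
  unfolding next_cut_def using link_before_cut cut_dist_less by (intro rim_path) auto

lemma reach_in_arc:
  assumes "\<forall>i<n. Inl i \<in> T \<longrightarrow> Inl i \<in> F" "j < n" "l \<in> arc j"
  shows "(Some j, Some l) \<in> reach F"
proof -
  have "l < n" "next_cut l = next_cut j" using assms(3) unfolding arc_def by auto
  then show ?thesis
    using reach_cut[OF assms(2,1)] reachable_sym[OF reach_cut[OF \<open>l < n\<close> assms(1)]]
    by (simp add: rtrancl_trans)
qed

lemma tree_arc_spokes_nonempty:
  assumes is_tree "j < n"
  shows "arc_spokes j \<noteq> {}"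
proof
  assume none: "arc_spokes j = {}"
  have "l \<notin> arc j" if "Inr (l, k) \<in> T" for l k
    using none that arc_spokes_iff by blast
  then have "closed_under_edges (mwheel_ends n) T (Some ` arc j)"
    using links_keep_arc by (intro closed_under_wheel_edges) auto
  moreover have "(Some j, None) \<in> reach T"
    using assms unfolding spanning_tree_def mwheel_V_def by auto
  moreover have "j \<in> arc j" using assms(2) unfolding arc_def by simp
  ultimately show False using reachable_closed by fastforce
qed

lemma tree_arc_spokes_le_1:
  assumes is_tree
  shows "card (arc_spokes j) \<le> 1"
proof -
  have "s = s'" if "s \<in> arc_spokes j" "s' \<in> arc_spokes j" for s s'
  proof (rule ccontr)
    assume "s \<noteq> s'"
    obtain l k l' k' where s: "s = (l, k)" "s' = (l', k')" by fastforce
    let ?e = "Inr (l, k) :: nat + nat \<times> nat"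
    have l: "l \<in> arc j" "?e \<in> T" and l': "l' \<in> arc j" "Inr (l', k') \<in> T - {?e}"
      using that \<open>s \<noteq> s'\<close> unfolding s arc_spokes_iff by auto
    have "(None, Some l') \<in> reach (T - {?e})"
      using edge_reachable[OF l'(2), of "mwheel_ends n" None "Some l'"] by simp
    moreover have "(Some l', Some l) \<in> reach (T - {?e})"
      using l l' by (intro reach_in_arc) (auto simp: arc_def)
    ultimately have "(None, Some l) \<in> reach (T - {?e})" by (rule rtrancl_trans)
    then show False
      using assms l(2) unfolding spanning_tree_def by auto
  qed
  then show ?thesis by (simp add: card_le_Suc0_iff_eq finite_arc_spokes)
qed

lemma connected_if_one_spoke_per_arc:
  assumes one: "\<forall>j<n. card (arc_spokes j) = 1" and "u \<in> mwheel_V n" "v \<in> mwheel_V n"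
  shows "(u, v) \<in> reach T"
proof -
  have hub: "(Some j, None) \<in> reach T" if "j < n" for j
  proof -
    have "card (arc_spokes j) = Suc 0" using one that by simp
    then obtain l k where "arc_spokes j = {(l, k)}"
      by (auto simp: card_1_singleton_iff)
    then have "l \<in> arc j" "Inr (l, k) \<in> T"
      using arc_spokes_iff[of l k j] by simp_all
    then have "(Some j, Some l) \<in> reach T" "(Some l, None) \<in> reach T"
      using that by (auto intro: reach_in_arc edge_reachable)
    then show ?thesis by (rule rtrancl_trans)
  qed
  have "(w, None) \<in> reach T" if "w \<in> mwheel_V n" for w
    using that hub unfolding mwheel_V_def by auto
  from this[OF assms(2)] reachable_sym[OF this[OF assms(3)]] show ?thesis
    by (rule rtrancl_trans)
qed

lemma spoke_bridge_if_one_spoke_per_arc: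
  assumes one: "\<forall>j<n. card (arc_spokes j) = 1"
    and e: "Inr (l, k) \<in> T" "mwheel_ends n (Inr (l, k)) = {u, v}"
  shows "(u, v) \<notin> reach (T - {Inr (l, k)})"
proof (rule not_reachable_if_separated)
  have l: "l < n" "l \<in> arc l" using spoke_less[OF e(1)] unfolding arc_def by auto
  then have "(l, k) \<in> arc_spokes l" using e(1) by (simp add: arc_spokes_iff)
  then have "arc_spokes l = {(l, k)}"
    using one l(1) by (auto simp: card_1_singleton_iff)
  then have "\<forall>l' k'. Inr (l', k') \<in> T - {Inr (l, k)} \<longrightarrow> l' \<notin> arc l"
    by (auto simp: set_eq_iff arc_spokes_iff)
  then show "closed_under_edges (mwheel_ends n) (T - {Inr (l, k)}) (Some ` arc l)"
    using links_keep_arc by (intro closed_under_wheel_edges) auto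
  show "Some l \<in> Some ` arc l" "None \<notin> Some ` arc l" using l by auto
  show "{u, v} = {Some l, None}" using e(2) by auto
qed

text \<open>Removing the link from i splits its arc into arc_prefix i and the rest; the arc's unique
  spoke lies in one of them, so the other part is cut off from the hub.\<close>
lemma link_bridge_if_one_spoke_per_arc:
  assumes one: "\<forall>j<n. card (arc_spokes j) = 1"
    and e: "Inl i \<in> T" "mwheel_ends n (Inl i) = {u, v}"
  shows "(u, v) \<notin> reach (T - {Inl i})"
proof -
  let ?i' = "(i + 1) mod n" and ?P = "arc_prefix i"
  have i: "i < n" using link_less[OF e(1)] .
  have arc: "l \<in> arc i \<longleftrightarrow> (l + 1) mod n \<in> arc i" if "Inl l \<in> T - {Inl i}" for l
    using that links_keep_arc by blast
  have prefix: "l \<in> ?P \<longleftrightarrow> (l + 1) mod n \<in> ?P" if "Inl l \<in> T - {Inl i}" for l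
    using that arc_prefix_link[OF link_less _ _ i] by blast
  obtain l0 k0 where "arc_spokes i = {(l0, k0)}"
    using one i by (auto simp: card_1_singleton_iff)
  then have spoke: "l = l0" if "Inr (l, k) \<in> T - {Inl i}" "l \<in> arc i" for l k
    using that by (auto simp: set_eq_iff arc_spokes_iff)
  have ends: "{u, v} = {Some i, Some ?i'}" "{u, v} = {Some ?i', Some i}"
    using e(2) by auto
  show ?thesis
  proof (cases "l0 \<in> ?P")
    case True
    have "closed_under_edges (mwheel_ends n) (T - {Inl i}) (Some ` (arc i - ?P))"
      using arc prefix spoke True by (intro closed_under_wheel_edges) blast+
    then show ?thesis
      using arc_prefix_last[OF i] e(1) ends(2) by (intro not_reachable_if_separated) auto
  next
    case False
    have "closed_under_edges (mwheel_ends n) (T - {Inl i}) (Some ` ?P)"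
      using prefix spoke False unfolding arc_prefix_def by (intro closed_under_wheel_edges) blast+
    then show ?thesis
      using arc_prefix_last[OF i] e(1) ends(1) by (intro not_reachable_if_separated) auto
  qed
qed

theorem tree_iff_one_spoke_per_arc: "is_tree \<longleftrightarrow> (\<forall>j<n. card (arc_spokes j) = 1)"
proof
  assume is_tree
  show "\<forall>j<n. card (arc_spokes j) = 1"
  proof (intro allI impI)
    fix j assume "j < n"
    then have "card (arc_spokes j) \<noteq> 0"
      using tree_arc_spokes_nonempty[OF \<open>is_tree\<close>] finite_arc_spokes by simp
    then show "card (arc_spokes j) = 1"
      using tree_arc_spokes_le_1[OF \<open>is_tree\<close>, of j] by linarith
  qed
next
  assume one: "\<forall>j<n. card (arc_spokes j) = 1"
  have "\<forall>e\<in>T. \<forall>u v. mwheel_ends n e = {u, v} \<longrightarrow> (u, v) \<notin> reach (T - {e})"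
  proof (intro ballI allI impI)
    fix e u v assume "e \<in> T" "mwheel_ends n e = {u, v}"
    then show "(u, v) \<notin> reach (T - {e})"
      using link_bridge_if_one_spoke_per_arc[OF one] spoke_bridge_if_one_spoke_per_arc[OF one]
      by (cases e) auto
  qed
  then show is_tree
    unfolding spanning_tree_def using edges connected_if_one_spoke_per_arc[OF one] by blast
qed

end

section \<open>Encoding edge sets of the wheel as lists\<close>

definition wheel_code :: "nat \<Rightarrow> (nat + nat \<times> nat) set \<Rightarrow> (bool \<times> nat set) list" where
  "wheel_code n T = map (\<lambda>j. (Inl j \<in> T, {k. Inr (j, k) \<in> T})) [0..<n]"

definition wheel_decode :: "(bool \<times> nat set) list \<Rightarrow> (nat + nat \<times> nat) set" where
  "wheel_decode xs =
     {Inl j | j. j < length xs \<and> fst (xs ! j)} \<union> {Inr (j, k) | j k. j < length xs \<and> k \<in> snd (xs ! j)}"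

lemma bij_betw_wheel_code: "bij_betw (wheel_code n) (Pow (mwheel_E n a)) (configs n a)"
proof (rule bij_betw_byWitness[where f' = wheel_decode])
  show "\<forall>T\<in>Pow (mwheel_E n a). wheel_decode (wheel_code n T) = T"
  proof
    fix T assume "T \<in> Pow (mwheel_E n a)"
    then have "x \<in> wheel_decode (wheel_code n T) \<longleftrightarrow> x \<in> T" for x
      unfolding wheel_decode_def wheel_code_def mwheel_E_def by (cases x) auto
    then show "wheel_decode (wheel_code n T) = T" by blast
  qed
  show "\<forall>xs\<in>configs n a. wheel_code n (wheel_decode xs) = xs"
  proof
    fix xs assume "xs \<in> configs n a"
    then have "length xs = n" unfolding configs_def by simp
    then show "wheel_code n (wheel_decode xs) = xs"
      unfolding wheel_code_def wheel_decode_def by (intro nth_equalityI) (auto simp: prod_eq_iff)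
  qed
  show "wheel_code n ` Pow (mwheel_E n a) \<subseteq> configs n a"
    unfolding wheel_code_def configs_def local_choices_def mwheel_E_def by auto
  show "wheel_decode ` configs n a \<subseteq> Pow (mwheel_E n a)"
  proof (intro image_subsetI PowI subsetI)
    fix xs e assume xs: "xs \<in> configs n a" and e: "e \<in> wheel_decode xs"
    then consider j where "e = Inl j" "j < n" | j k where "e = Inr (j, k)" "j < n" "k \<in> snd (xs ! j)"
      unfolding wheel_decode_def configs_def by auto
    then show "e \<in> mwheel_E n a"
    proof cases
      case (2 j k)
      then have "xs ! j \<in> local_choices a" using xs unfolding configs_def by auto
      then show ?thesis using 2 unfolding local_choices_def mwheel_E_def by auto
    qed (simp add: mwheel_E_def)
  qed
qed

lemma (in wheel_subgraph) tree_iff_code: "is_tree \<longleftrightarrow> wheel_code n T \<in> tree_codes n a"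
proof (cases "\<exists>m<n. Inl m \<notin> T")
  case False
  then show ?thesis
    using tree_has_cut unfolding tree_codes_def wheel_code_def by auto
next
  case True
  interpret wheel_with_cut n a T
    by (intro wheel_with_cut.intro wheel_with_cut_axioms.intro wheel_subgraph_axioms True)
  have "wheel_code n T \<in> configs n a"
    using bij_betw_wheel_code edges by (blast dest: bij_betwE)
  moreover have "\<exists>c\<in>set (wheel_code n T). \<not> fst c"
    using True unfolding wheel_code_def by auto
  moreover have "wheel_code n T = map (\<lambda>j. (Inl j \<in> T, spokes j)) [0..<n]"
    unfolding wheel_code_def spokes_def ..
  ultimately show ?thesis
    unfolding tree_iff_one_spoke_per_arc card_arc_spokes tree_codes_def
    by (simp add: closed_run_iff_arc_weights)
qed

lemma num_spanning_trees_mwheel: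
  assumes "2 \<le> n"
  shows "num_spanning_trees (mwheel_V n) (mwheel_E n a) (mwheel_ends n) = card (tree_codes n a)"
proof -
  let ?trees = "{T. spanning_tree (mwheel_V n) (mwheel_E n a) (mwheel_ends n) T}"
  have "spanning_tree (mwheel_V n) (mwheel_E n a) (mwheel_ends n) T \<longleftrightarrow>
      T \<in> Pow (mwheel_E n a) \<and> wheel_code n T \<in> tree_codes n a" for T
  proof (cases "T \<subseteq> mwheel_E n a")
    case True
    then show ?thesis using wheel_subgraph.tree_iff_code[OF wheel_subgraph.intro[OF assms True]] by simp
  qed (simp add: spanning_tree_def)
  then have "?trees = {T \<in> Pow (mwheel_E n a). wheel_code n T \<in> tree_codes n a}"
    by blast
  moreover have "tree_codes n a \<subseteq> wheel_code n ` Pow (mwheel_E n a)"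
    using bij_betw_wheel_code unfolding bij_betw_def tree_codes_def by auto
  then have "wheel_code n ` {T \<in> Pow (mwheel_E n a). wheel_code n T \<in> tree_codes n a} = tree_codes n a"
    by blast
  ultimately have "bij_betw (wheel_code n) ?trees (tree_codes n a)"
    by (intro bij_betw_subset[OF bij_betw_wheel_code[of n a]]) auto
  then show ?thesis
    unfolding num_spanning_trees_def by (rule bij_betw_same_card)
qed

theorem theorem5p10:
  fixes n a :: nat
  assumes "a \<ge> 1" and "n \<ge> 2"
  shows "int (num_spanning_trees (mwheel_V n) (mwheel_E n a) (mwheel_ends n))
           = int a * Wpoly (n - 1) (int a)
       \<and> (a = 1 \<longrightarrow>
           int (num_spanning_trees (mwheel_V n) (mwheel_E n a) (mwheel_ends n))
             = lucas (2 * n) - 2)"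
proof -
  have count: "int (num_spanning_trees (mwheel_V n) (mwheel_E n a) (mwheel_ends n))
      = transfer_trace (int a) n - 2"
    using num_spanning_trees_mwheel[OF assms(2)] card_tree_codes by simp
  have "transfer_trace (int a) n - 2 = int a * Wpoly (n - 1) (int a)"
    using transfer_trace_Suc_eq_Wpoly[of "int a" "n - 1"] assms(2) by simp
  then show ?thesis
    using count transfer_trace_1_eq_lucas[of n] by auto
qed

end
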